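(* Let $(\overline{\mathbf{v}}^n,\overline{\boldsymbol{\rho}}^n)_{n\in\mathbb{N}}$ be a supersolution and $(\underline{\mathbf{v}}^n,\underline{\boldsymbol{\rho}}^n)_{n\in\mathbb{N}}$ a subsolution of the iterative scheme described in the context. Assume that $\underline{v}^0_j(t,x)\le\overline{v}^0_j(t,x)$ and $\underline{\rho}^0_j(t)\le\overline{\rho}^0_j(t)$ for all $t\ge0$, $x\in[0,1]$, $j\in\mathbb{Z}$, and that for all $n\ge1$, $\underline{v}^n_j(0,x)\le\overline{v}^n_j(0,x)$ and $\underline{\rho}^n_j(0)\le\overline{\rho}^n_j(0)$ for $x\in[0,1]$, $j\in\mathbb{Z}$. Then for all $t>0$, $n\ge1$, $j\in\mathbb{Z}$: $\underline{v}^n_j(t,x)\le\overline{v}^n_j(t,x)$ for $x\in[0,1]$ and $\underline{\rho}^n_j(t)\le\overline{\rho}^n_j(t)$.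
   Context: Fix $\alpha,\beta,d>0$ and $f\in\mathscr{C}^1([0,1])$ with $f(0)=f(1)=0$, $0<f(u)\le f'(0)u$ on $(0,1)$, extended to a locally Lipschitz function on $\mathbb{R}$ negative on $\mathbb{R}\setminus[0,1]$. Consider sequences indexed by $n\in\mathbb{N}$ of pairs $(\mathbf{v}^n,\boldsymbol{\rho}^n)=(v^n_j,\rho^n_j)_{j\in\mathbb{Z}}$, where for $n=0$ the $v^0_j$ are continuous functions on $[0,+\infty)\times[0,1]$ and $\rho^0_j$ continuous on $[0,+\infty)$, and for every $n\ge1$ and $j$: $\rho^n_j\in\mathscr{C}^1([0,+\infty))$, $v^n_j\in\mathscr{C}^0([0,+\infty)\times[0,1])$, $\partial_tv^n_j,\partial_x^2v^n_j\in\mathscr{C}^0((0,+\infty)\times(0,1))$, $\partial_xv^n_j\in\mathscr{C}^0((0,+\infty)\times[0,1])$. Such a sequence $(\overline{\mathbf{v}}^n,\overline{\boldsymbol{\rho}}^n)_n$ is a supersolution of the iterative scheme if for all $n\ge1$, $t>0$, $j\in\mathbb{Z}$: $\partial_t\overline{v}^n_j\ge d\,\partial_x^2\overline{v}^n_j$ on $(0,1)$; $(\overline{\rho}^n_j)'(t)\ge f(\overline{\rho}^n_j(t))+\alpha(\overline{v}^{n-1}_j(t,0)+\overline{v}^{n-1}_{j-1}(t,1))-2\beta\overline{\rho}^n_j(t)$; $-d\,\partial_x\overline{v}^n_j(t,0)+\alpha\overline{v}^n_j(t,0)\ge\beta\overline{\rho}^n_j(t)$; $d\,\partial_x\overline{v}^n_j(t,1)+\alpha\overline{v}^n_j(t,1)\ge\beta\overline{\rho}^n_{j+1}(t)$.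 A subsolution is defined with all these inequalities reversed. *)

theory Defs
  imports "HOL-Analysis.Analysis"
begin

text \<open>Indexing conventions: v n j t x stands for v^n_j(t,x), rho n j t for rho^n_j(t),
  with n :: nat, j :: int, t, x :: real.\<close>

definition reaction_ok :: "(real \<Rightarrow> real) \<Rightarrow> bool" where
  "reaction_ok f \<longleftrightarrow>
     (\<exists>f'. continuous_on {0..1} f' \<and>
        (\<forall>u\<in>{0..1}. (f has_real_derivative f' u) (at u within {0..1})) \<and>
        f 0 = 0 \<and> f 1 = 0 \<and>
        (\<forall>u\<in>{0<..<1}. 0 < f u \<and> f u \<le> f' 0 * u)) \<and>
     (\<forall>x. \<exists>r>0. \<exists>L. lipschitz_on L (cball x r) f) \<and>
     (\<forall>u. u \<notin> {0..1} \<longrightarrow> f u < 0)"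

definition initial_regular :: "(nat \<Rightarrow> int \<Rightarrow> real \<Rightarrow> real \<Rightarrow> real) \<Rightarrow> (nat \<Rightarrow> int \<Rightarrow> real \<Rightarrow> real) \<Rightarrow> bool" where
  "initial_regular v rho \<longleftrightarrow>
     (\<forall>j. continuous_on ({0..} \<times> {0..1}) (\<lambda>(t,x). v 0 j t x) \<and> continuous_on {0..} (rho 0 j))"

text \<open>The relation R is (\<ge>) for supersolutions and (\<le>) for subsolutions:
  every inequality "lhs \<ge> rhs" of the scheme is written "R lhs rhs".\<close>
definition scheme_rel ::
  "(real \<Rightarrow> real \<Rightarrow> bool) \<Rightarrow> (real \<Rightarrow> real) \<Rightarrow> real \<Rightarrow> real \<Rightarrow> real \<Rightarrow>
   (nat \<Rightarrow> int \<Rightarrow> real \<Rightarrow> real \<Rightarrow> real) \<Rightarrow> (nat \<Rightarrow> int \<Rightarrow> real \<Rightarrow> real) \<Rightarrow> bool" where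
  "scheme_rel R f \<alpha> \<beta> d v rho \<longleftrightarrow>
     initial_regular v rho \<and>
     (\<forall>n\<ge>1. \<forall>j. \<exists>vt vx vxx rho'.
        continuous_on ({0..} \<times> {0..1}) (\<lambda>(t,x). v n j t x) \<and>
        continuous_on ({0<..} \<times> {0<..<1}) (\<lambda>(t,x). vt t x) \<and>
        continuous_on ({0<..} \<times> {0<..<1}) (\<lambda>(t,x). vxx t x) \<and>
        continuous_on ({0<..} \<times> {0..1}) (\<lambda>(t,x). vx t x) \<and>
        (\<forall>t>0. \<forall>x\<in>{0<..<1}. ((\<lambda>s. v n j s x) has_real_derivative vt t x) (at t)) \<and>
        (\<forall>t>0. \<forall>x\<in>{0..1}. ((\<lambda>y. v n j t y) has_real_derivative vx t x) (at x within {0..1})) \<and>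
        (\<forall>t>0. \<forall>x\<in>{0<..<1}. ((\<lambda>y. vx t y) has_real_derivative vxx t x) (at x)) \<and>
        continuous_on {0..} rho' \<and>
        (\<forall>t\<ge>0. (rho n j has_real_derivative rho' t) (at t within {0..})) \<and>
        (\<forall>t>0.
          (\<forall>x\<in>{0<..<1}. R (vt t x) (d * vxx t x)) \<and>
          R (rho' t) (f (rho n j t) + \<alpha> * (v (n-1) j t 0 + v (n-1) (j-1) t 1) - 2 * \<beta> * rho n j t) \<and>
          R (- d * vx t 0 + \<alpha> * v n j t 0) (\<beta> * rho n j t) \<and>
          R (d * vx t 1 + \<alpha> * v n j t 1) (\<beta> * rho n (j+1) t)))"

definition supersolution where
  "supersolution f \<alpha> \<beta> d v rho \<longleftrightarrow> scheme_rel (\<lambda>a b. a \<ge> b) f \<alpha> \<beta> d v rho"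

definition subsolution where
  "subsolution f \<alpha> \<beta> d v rho \<longleftrightarrow> scheme_rel (\<lambda>a b. a \<le> b) f \<alpha> \<beta> d v rho"

end

(* If the v^(n-1) are ordered, rho-bar^n and rho-underline^n are a super- and a
   subsolution of u' = f u - 2 beta u + g with ordered forcings g = alpha (v(t,0) + v(t,1)); as f is
   locally Lipschitz, ODE comparison orders them.  Then w = v-bar^n - v-underline^n satisfies
   w_t >= d w_xx, w(0,.) >= 0 and, because the rho^n are ordered, the Robin inequalities
   -d w_x(0) + alpha w(0) >= 0 and d w_x(1) + alpha w(1) >= 0; the minimum principle gives w >= 0.
   Both comparisons are first-contact arguments: perturb the difference by a small increasing
   function of t and take the first time it vanishes.  There its time derivative is <= 0, which
   contradicts the equation; for the heat equation the contact point is interior with w_xx >= 0,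
   since at a negative boundary minimum the sign of w_x violates the Robin condition. *)

theory Submission
  imports Defs
begin

definition locally_lipschitz :: "('a::metric_space \<Rightarrow> 'b::metric_space) \<Rightarrow> bool" where
  "locally_lipschitz F \<longleftrightarrow> (\<forall>x. \<exists>r>0. \<exists>L. L-lipschitz_on (cball x r) F)"

lemma locally_lipschitz_diff_linear:
  fixes F :: "real \<Rightarrow> real"
  assumes "locally_lipschitz F"
  shows "locally_lipschitz (\<lambda>u. F u - c * u)"
  unfolding locally_lipschitz_def
proof
  fix x
  from assms obtain r L where "r > 0" "L-lipschitz_on (cball x r) F"
    unfolding locally_lipschitz_def by blast
  then have "(L + \<bar>c\<bar> * 1)-lipschitz_on (cball x r) (\<lambda>u. F u - c * u)"
    by (intro lipschitz_on_diff lipschitz_on_cmult_real lipschitz_on_id)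
  with \<open>r > 0\<close> show "\<exists>r>0. \<exists>L. L-lipschitz_on (cball x r) (\<lambda>u. F u - c * u)" by blast
qed

lemma locally_lipschitz_lipschitz_on_compact:
  fixes F :: "'a::metric_space \<Rightarrow> 'b::metric_space"
  assumes "locally_lipschitz F" and "compact S"
  obtains L where "L-lipschitz_on S F"
proof -
  have "local_lipschitz {0::real} S (\<lambda>_. F)"
  proof (rule local_lipschitzI)
    fix x assume "x \<in> S"
    from assms(1) obtain r L where "r > 0" "L-lipschitz_on (cball x r) F"
      unfolding locally_lipschitz_def by blast
    then show "\<exists>u>0. \<exists>L. \<forall>t\<in>cball t u \<inter> {0}. L-lipschitz_on (cball x u \<inter> S) F" for t :: real
      by (meson lipschitz_on_subset Int_lower1)
  qed
  then show thesis
    using local_lipschitz_compact_implies_lipschitz[where X = S and T = "{0::real}" and f = "\<lambda>_. F"]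
      assms(2) that
    by auto
qed

lemma has_real_derivative_nonneg_at_left_endpoint_min:
  fixes w :: "real \<Rightarrow> real"
  assumes "(w has_real_derivative D) (at a within {a..b})" and "a < b"
    and "\<forall>y\<in>{a..b}. w a \<le> w y"
  shows "0 \<le> D"
proof (rule ccontr)
  assume "\<not> 0 \<le> D"
  then obtain e where "e > 0" and e: "\<forall>h>0. a + h \<in> {a..b} \<longrightarrow> h < e \<longrightarrow> w (a + h) < w a"
    using has_real_derivative_neg_dec_right[OF assms(1)] by force
  define h where "h = min e (b - a) / 2"
  have h: "0 < h" "h < e" "a + h \<in> {a..b}"
    using \<open>e > 0\<close> \<open>a < b\<close> unfolding h_def by (auto simp: min_def field_simps)
  then have "w (a + h) < w a" using e by blast
  with h show False using assms(3) by fastforce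
qed

lemma has_real_derivative_nonpos_at_right_endpoint_min:
  fixes w :: "real \<Rightarrow> real"
  assumes "(w has_real_derivative D) (at b within {a..b})" and "a < b"
    and "\<forall>y\<in>{a..b}. w b \<le> w y"
  shows "D \<le> 0"
proof (rule ccontr)
  assume "\<not> D \<le> 0"
  then obtain e where "e > 0" and e: "\<forall>h>0. b - h \<in> {a..b} \<longrightarrow> h < e \<longrightarrow> w (b - h) < w b"
    using has_real_derivative_pos_inc_left[OF assms(1)] by force
  define h where "h = min e (b - a) / 2"
  have h: "0 < h" "h < e" "b - h \<in> {a..b}"
    using \<open>e > 0\<close> \<open>a < b\<close> unfolding h_def by (auto simp: min_def field_simps)
  then have "w (b - h) < w b" using e by blast
  with h show False using assms(3) by fastforce
qed

lemma second_derivative_nonneg_at_interior_min: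
  fixes w w' :: "real \<Rightarrow> real"
  assumes "x \<in> {a<..<b}"
    and w': "\<forall>y\<in>{a<..<b}. (w has_real_derivative w' y) (at y)"
    and w'': "(w' has_real_derivative D) (at x)"
    and min: "\<forall>y\<in>{a<..<b}. w x \<le> w y"
  shows "0 \<le> D"
proof (rule ccontr)
  assume "\<not> 0 \<le> D"
  have "w' x = 0"
  proof (rule DERIV_local_min)
    show "(w has_real_derivative w' x) (at x)" using w' assms(1) by blast
    show "0 < min (x - a) (b - x)" using assms(1) by simp
    show "\<forall>y. \<bar>x - y\<bar> < min (x - a) (b - x) \<longrightarrow> w x \<le> w y"
      using min by (auto simp: abs_less_iff)
  qed
  moreover obtain e where "e > 0" and e: "\<forall>h>0. h < e \<longrightarrow> w' x < w' (x - h)"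
    using DERIV_neg_dec_left[OF w''] \<open>\<not> 0 \<le> D\<close> by force
  define c where "c = x - min e (x - a) / 2"
  have c: "a < c" "c < x" "x - c < e"
    using assms(1) \<open>e > 0\<close> unfolding c_def by (auto simp: min_def field_simps)
  then obtain \<xi> where \<xi>: "c < \<xi>" "\<xi> < x" "w x - w c = (x - c) * w' \<xi>"
    using MVT2[of c x w w'] w' assms(1) by force
  ultimately have "0 < w' \<xi>"
    using e[rule_format, of "x - \<xi>"] c by auto
  with \<xi> have "w c < w x" using mult_pos_pos[of "x - c" "w' \<xi>"] by linarith
  moreover have "c \<in> {a<..<b}" using c assms(1) by auto
  ultimately show False using min by fastforce
qed

lemma first_contact_time:
  fixes z :: "real \<Rightarrow> 'a::metric_space \<Rightarrow> real"
  assumes "compact K" and cont: "continuous_on ({0..T} \<times> K) (\<lambda>(t, x). z t x)"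
    and init: "\<forall>x\<in>K. 0 < z 0 x" and "0 \<le> T" and "x0 \<in> K" and "z T x0 \<le> 0"
  obtains ts xs where "0 < ts" "ts \<le> T" "xs \<in> K" "z ts xs = 0"
    and "\<forall>s\<in>{0..ts}. \<forall>x\<in>K. 0 \<le> z s x"
proof -
  define S where "S = ({0..T} \<times> K) \<inter> (\<lambda>(t, x). z t x) -` {..0}"
  have "closed S"
    unfolding S_def using continuous_closed_preimage[OF cont _ closed_atMost] assms(1)
    by (simp add: closed_Times compact_imp_closed)
  then have "compact S"
    using compact_Int_closed[OF compact_Times[OF compact_Icc[of 0 T] assms(1)], of S]
    by (simp add: S_def Int_absorb1 Int_assoc)
  moreover have "(T, x0) \<in> S" using assms unfolding S_def by auto
  ultimately obtain p where "p \<in> S" and p_first: "\<forall>q\<in>S. fst p \<le> fst q"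
    using continuous_attains_inf[of S fst] continuous_on_fst[OF continuous_on_id] by blast
  define ts xs where "ts = fst p" and "xs = snd p"
  have p: "0 \<le> ts" "ts \<le> T" "xs \<in> K" "z ts xs \<le> 0"
    using \<open>p \<in> S\<close> unfolding S_def ts_def xs_def by (auto split: prod.splits)
  have before: "\<forall>s\<in>{0..<ts}. \<forall>x\<in>K. 0 < z s x"
    using p_first p unfolding S_def ts_def by force
  have "0 < ts" using p init by (metis order.not_eq_order_implies_strict not_le)
  have at_ts: "0 \<le> z ts x" if "x \<in> K" for x
  proof (rule continuous_ge_on_closure[where f = "\<lambda>s. z s x" and S = "{0..<ts}" and x = ts])
    show "continuous_on (closure {0..<ts}) (\<lambda>s. z s x)"
      using \<open>0 < ts\<close> p(2) that
      by (intro continuous_on_compose2[OF cont, of _ "\<lambda>s. (s, x)", simplified]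
          continuous_intros) auto
  qed (use \<open>0 < ts\<close> before that in \<open>auto intro: less_imp_le\<close>)
  have "\<forall>s\<in>{0..ts}. \<forall>x\<in>K. 0 \<le> z s x"
    using before at_ts by (metis atLeastAtMost_iff atLeastLessThan_iff less_eq_real_def less_imp_le)
  with p at_ts \<open>0 < ts\<close> show thesis by (intro that) (auto intro: antisym)
qed

lemma ode_comparison:
  fixes F a b a' b' :: "real \<Rightarrow> real"
  assumes F: "locally_lipschitz F"
    and a: "\<forall>t\<ge>0. (a has_real_derivative a' t) (at t within {0..})"
    and b: "\<forall>t\<ge>0. (b has_real_derivative b' t) (at t within {0..})"
    and super_sub: "\<forall>t>0. b' t - F (b t) \<le> a' t - F (a t)"
    and "b 0 \<le> a 0" and "0 \<le> T"
  shows "b T \<le> a T"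
proof (rule ccontr)
  assume "\<not> b T \<le> a T"
  have "continuous_on {0..} a" and "continuous_on {0..} b"
    using a b by (auto intro!: DERIV_continuous_on)
  then have cont_a: "continuous_on {0..T} a" and cont_b: "continuous_on {0..T} b"
    by (auto elim: continuous_on_subset)
  have "compact (a ` {0..T} \<union> b ` {0..T})"
    using cont_a cont_b by (intro compact_Un compact_continuous_image compact_Icc)
  then obtain L where L: "L-lipschitz_on (a ` {0..T} \<union> b ` {0..T}) F"
    using locally_lipschitz_lipschitz_on_compact[OF F] by blast
  \<comment> \<open>The weight \<open>exp (K * t)\<close> with \<open>K > L\<close> outgrows the Lipschitz defect at first contact.\<close>
  define K where "K = L + 1"
  define \<epsilon> where "\<epsilon> = (b T - a T) / (2 * exp (K * T))"
  define z where "z t x = a t - b t + \<epsilon> * exp (K * t)" for t x :: real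
  have "0 < \<epsilon>" using \<open>\<not> b T \<le> a T\<close> unfolding \<epsilon>_def by simp
  have "continuous_on ({0..T} \<times> {0}) (\<lambda>(t, x). z t x)"
    unfolding z_def case_prod_unfold
    by (intro continuous_intros continuous_on_compose2[OF cont_a] continuous_on_compose2[OF cont_b])
      auto
  moreover have "z T 0 \<le> 0" using \<open>\<not> b T \<le> a T\<close> unfolding z_def \<epsilon>_def by (simp add: field_simps)
  moreover have "0 < z 0 0" using \<open>b 0 \<le> a 0\<close> \<open>0 < \<epsilon>\<close> unfolding z_def by simp
  ultimately obtain ts where ts: "0 < ts" "ts \<le> T" "z ts 0 = 0"
    and nonneg: "\<forall>s\<in>{0..ts}. 0 \<le> z s 0"
    using first_contact_time[of "{0}" T z 0] \<open>0 \<le> T\<close> by auto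
  define E where "E = exp (K * ts)"
  have "(a has_real_derivative a' ts) (at ts within {0..ts})"
    and "(b has_real_derivative b' ts) (at ts within {0..ts})"
    using a[rule_format, of ts] b[rule_format, of ts] ts(1) by (auto elim!: DERIV_subset)
  then have "((\<lambda>s. z s 0) has_real_derivative a' ts - b' ts + \<epsilon> * (K * E)) (at ts within {0..ts})"
    unfolding z_def E_def by (auto intro!: derivative_eq_intros)
  then have "a' ts - b' ts + \<epsilon> * (K * E) \<le> 0"
    by (rule has_real_derivative_nonpos_at_right_endpoint_min) (use ts nonneg in auto)
  moreover have "b ts - a ts = \<epsilon> * E" using ts(3) unfolding z_def E_def by simp
  moreover have "0 < \<epsilon> * E" using \<open>0 < \<epsilon>\<close> unfolding E_def by simp
  moreover have "F (b ts) - F (a ts) \<le> L * \<bar>b ts - a ts\<bar>"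
    using lipschitz_onD[OF L, of "b ts" "a ts"] ts by (simp add: dist_real_def)
  moreover have "b' ts - F (b ts) \<le> a' ts - F (a ts)" using super_sub ts(1) by blast
  ultimately show False
    unfolding K_def by (simp add: algebra_simps)
qed

lemma robin_negative_min_interior:
  fixes u u' u'' :: "real \<Rightarrow> real"
  assumes "0 < d" and "0 < \<alpha>"
    and u': "\<forall>x\<in>{0..1}. (u has_real_derivative u' x) (at x within {0..1})"
    and u'': "\<forall>x\<in>{0<..<1}. (u' has_real_derivative u'' x) (at x)"
    and left: "0 \<le> - d * u' 0 + \<alpha> * u 0" and right: "0 \<le> d * u' 1 + \<alpha> * u 1"
    and "xs \<in> {0..1}" and min: "\<forall>y\<in>{0..1}. u xs \<le> u y" and "u xs < 0"
  shows "xs \<in> {0<..<1}" and "0 \<le> u'' xs"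
proof -
  show "xs \<in> {0<..<1}"
  proof (rule ccontr)
    assume "xs \<notin> {0<..<1}"
    then consider "xs = 0" | "xs = 1" using \<open>xs \<in> {0..1}\<close> by force
    then show False
    proof cases
      case 1
      have "0 \<le> u' 0"
        by (rule has_real_derivative_nonneg_at_left_endpoint_min[where a = 0 and b = 1])
          (use u' min 1 in auto)
      then have "0 \<le> d * u' 0" using \<open>0 < d\<close> by simp
      moreover have "\<alpha> * u 0 < 0" using \<open>u xs < 0\<close> 1 \<open>0 < \<alpha>\<close> by (simp add: mult_pos_neg)
      ultimately show False using left by linarith
    next
      case 2
      have "u' 1 \<le> 0"
        by (rule has_real_derivative_nonpos_at_right_endpoint_min[where a = 0 and b = 1])
          (use u' min 2 in auto)
      then have "d * u' 1 \<le> 0" using \<open>0 < d\<close> by (simp add: mult_nonneg_nonpos)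
      moreover have "\<alpha> * u 1 < 0" using \<open>u xs < 0\<close> 2 \<open>0 < \<alpha>\<close> by (simp add: mult_pos_neg)
      ultimately show False using right by linarith
    qed
  qed
  then show "0 \<le> u'' xs"
  proof (rule second_derivative_nonneg_at_interior_min)
    show "\<forall>y\<in>{0<..<1}. (u has_real_derivative u' y) (at y)"
    proof
      fix y :: real assume "y \<in> {0<..<1}"
      then have "at y within {0..1} = at y" by (intro at_within_Icc_at) auto
      moreover have "(u has_real_derivative u' y) (at y within {0..1})"
        using u' \<open>y \<in> {0<..<1}\<close> by simp
      ultimately show "(u has_real_derivative u' y) (at y)" by simp
    qed
    show "(u' has_real_derivative u'' xs) (at xs)" using u'' \<open>xs \<in> {0<..<1}\<close> by blast
  qed (use min in auto)
qed

lemma robin_heat_minimum_principle: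
  fixes w wt wx wxx :: "real \<Rightarrow> real \<Rightarrow> real" and d \<alpha> :: real
  assumes "0 < d" and "0 < \<alpha>"
    and cont: "continuous_on ({0..} \<times> {0..1}) (\<lambda>(t, x). w t x)"
    and w_t: "\<forall>t>0. \<forall>x\<in>{0<..<1}. ((\<lambda>s. w s x) has_real_derivative wt t x) (at t)"
    and w_x: "\<forall>t>0. \<forall>x\<in>{0..1}. (w t has_real_derivative wx t x) (at x within {0..1})"
    and w_xx: "\<forall>t>0. \<forall>x\<in>{0<..<1}. (wx t has_real_derivative wxx t x) (at x)"
    and heat: "\<forall>t>0. \<forall>x\<in>{0<..<1}. d * wxx t x \<le> wt t x"
    and left: "\<forall>t>0. 0 \<le> - d * wx t 0 + \<alpha> * w t 0"
    and right: "\<forall>t>0. 0 \<le> d * wx t 1 + \<alpha> * w t 1"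
    and init: "\<forall>x\<in>{0..1}. 0 \<le> w 0 x"
    and "0 \<le> T" and "x0 \<in> {0..1}"
  shows "0 \<le> w T x0"
proof (rule ccontr)
  assume "\<not> 0 \<le> w T x0"
  define \<epsilon> where "\<epsilon> = - w T x0 / (2 * (1 + T))"
  define z where "z t x = w t x + \<epsilon> * (1 + t)" for t x
  have "0 < \<epsilon>" using \<open>\<not> 0 \<le> w T x0\<close> \<open>0 \<le> T\<close> unfolding \<epsilon>_def
    by (intro divide_pos_pos) auto
  have "continuous_on ({0..T} \<times> {0..1}) (\<lambda>(t, x). w t x)"
    by (rule continuous_on_subset[OF cont]) auto
  then have cont_z: "continuous_on ({0..T} \<times> {0..1}) (\<lambda>(t, x). z t x)"
    unfolding z_def case_prod_unfold by (intro continuous_intros)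
  have "z T x0 \<le> 0"
  proof -
    have "\<epsilon> * (1 + T) = - w T x0 / 2"
      using \<open>0 \<le> T\<close> unfolding \<epsilon>_def by (simp add: field_simps)
    then show ?thesis using \<open>\<not> 0 \<le> w T x0\<close> unfolding z_def by simp
  qed
  moreover have "\<forall>x\<in>{0..1}. 0 < z 0 x" using init \<open>0 < \<epsilon>\<close> unfolding z_def by force
  ultimately obtain ts xs where ts: "0 < ts" "ts \<le> T" "xs \<in> {0..1}" "z ts xs = 0"
    and nonneg: "\<forall>s\<in>{0..ts}. \<forall>x\<in>{0..1}. 0 \<le> z s x"
    using first_contact_time[OF compact_Icc cont_z _ \<open>0 \<le> T\<close> \<open>x0 \<in> {0..1}\<close>] by blast
  have min: "\<forall>y\<in>{0..1}. w ts xs \<le> w ts y"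
  proof
    fix y :: real assume "y \<in> {0..1}"
    then have "z ts xs \<le> z ts y" using nonneg ts(1,4) by auto
    then show "w ts xs \<le> w ts y" unfolding z_def by simp
  qed
  have "0 < \<epsilon> * (1 + ts)" using \<open>0 < \<epsilon>\<close> ts(1) by simp
  then have "w ts xs < 0" using ts(4) unfolding z_def by simp
  then have interior: "xs \<in> {0<..<1}" and "0 \<le> wxx ts xs"
    using robin_negative_min_interior[OF \<open>0 < d\<close> \<open>0 < \<alpha>\<close>, where u = "w ts" and u' = "wx ts"
        and u'' = "wxx ts"] w_x w_xx left right ts(1,3) min
    by auto
  have "((\<lambda>s. w s xs) has_real_derivative wt ts xs) (at ts)" using w_t ts(1) interior by blast
  then have "((\<lambda>s. z s xs) has_real_derivative wt ts xs + \<epsilon>) (at ts)"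
    unfolding z_def by (auto intro!: derivative_eq_intros)
  then have "wt ts xs + \<epsilon> \<le> 0"
    by (rule has_real_derivative_nonpos_at_right_endpoint_min[OF has_field_derivative_at_within])
      (use ts nonneg in auto)
  moreover have "d * wxx ts xs \<le> wt ts xs" using heat ts(1) interior by blast
  moreover have "0 \<le> d * wxx ts xs" using \<open>0 \<le> wxx ts xs\<close> \<open>0 < d\<close> by simp
  ultimately show False using \<open>0 < \<epsilon>\<close> by linarith
qed

lemma scheme_rel_rhoD:
  assumes "scheme_rel R f \<alpha> \<beta> d v rho" and "1 \<le> n"
  obtains rho' where "\<forall>t\<ge>0. (rho n j has_real_derivative rho' t) (at t within {0..})"
    and "\<forall>t>0. R (rho' t)
      (f (rho n j t) + \<alpha> * (v (n-1) j t 0 + v (n-1) (j-1) t 1) - 2 * \<beta> * rho n j t)"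
  using assms(1)[unfolded scheme_rel_def, THEN conjunct2, rule_format, OF assms(2), of j] by auto

lemma scheme_rel_vD:
  assumes "scheme_rel R f \<alpha> \<beta> d v rho" and "1 \<le> n"
  obtains vt vx vxx where "continuous_on ({0..} \<times> {0..1}) (\<lambda>(t, x). v n j t x)"
    and "\<forall>t>0. \<forall>x\<in>{0<..<1}. ((\<lambda>s. v n j s x) has_real_derivative vt t x) (at t)"
    and "\<forall>t>0. \<forall>x\<in>{0..1}. (v n j t has_real_derivative vx t x) (at x within {0..1})"
    and "\<forall>t>0. \<forall>x\<in>{0<..<1}. (vx t has_real_derivative vxx t x) (at x)"
    and "\<forall>t>0. \<forall>x\<in>{0<..<1}. R (vt t x) (d * vxx t x)"
    and "\<forall>t>0. R (- d * vx t 0 + \<alpha> * v n j t 0) (\<beta> * rho n j t)"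
    and "\<forall>t>0. R (d * vx t 1 + \<alpha> * v n j t 1) (\<beta> * rho n (j+1) t)"
proof -
  obtain vt vx vxx and rho' :: "real \<Rightarrow> real" where
    "continuous_on ({0..} \<times> {0..1}) (\<lambda>(t, x). v n j t x)"
    "\<forall>t>0. \<forall>x\<in>{0<..<1}. ((\<lambda>s. v n j s x) has_real_derivative vt t x) (at t)"
    "\<forall>t>0. \<forall>x\<in>{0..1}. ((\<lambda>y. v n j t y) has_real_derivative vx t x) (at x within {0..1})"
    "\<forall>t>0. \<forall>x\<in>{0<..<1}. ((\<lambda>y. vx t y) has_real_derivative vxx t x) (at x)"
    "\<forall>t>0. (\<forall>x\<in>{0<..<1}. R (vt t x) (d * vxx t x)) \<and>
       R (- d * vx t 0 + \<alpha> * v n j t 0) (\<beta> * rho n j t) \<and>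
       R (d * vx t 1 + \<alpha> * v n j t 1) (\<beta> * rho n (j+1) t)"
    using assms(1)[unfolded scheme_rel_def, THEN conjunct2, rule_format, OF assms(2), of j] by auto
  then show thesis by (intro that) auto
qed

lemma rho_comparison:
  assumes "reaction_ok f" and "0 \<le> \<alpha>"
    and super: "supersolution f \<alpha> \<beta> d vu ru" and sub: "subsolution f \<alpha> \<beta> d vl rl"
    and "1 \<le> n" and below: "\<forall>j. \<forall>t>0. \<forall>x\<in>{0..1}. vl (n-1) j t x \<le> vu (n-1) j t x"
    and "rl n j 0 \<le> ru n j 0" and "0 \<le> t"
  shows "rl n j t \<le> ru n j t"
proof -
  define F where "F u = f u - 2 * \<beta> * u" for u
  have "locally_lipschitz f" using assms(1) unfolding reaction_ok_def locally_lipschitz_def by blast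
  then have lip: "locally_lipschitz F" unfolding F_def by (rule locally_lipschitz_diff_linear)
  obtain ru' where ru': "\<forall>t\<ge>0. (ru n j has_real_derivative ru' t) (at t within {0..})"
    and ru'_ge: "\<forall>t>0. f (ru n j t) + \<alpha> * (vu (n-1) j t 0 + vu (n-1) (j-1) t 1)
      - 2 * \<beta> * ru n j t \<le> ru' t"
    using scheme_rel_rhoD[OF super[unfolded supersolution_def] \<open>1 \<le> n\<close>] by blast
  obtain rl' where rl': "\<forall>t\<ge>0. (rl n j has_real_derivative rl' t) (at t within {0..})"
    and rl'_le: "\<forall>t>0. rl' t \<le> f (rl n j t) + \<alpha> * (vl (n-1) j t 0 + vl (n-1) (j-1) t 1)
      - 2 * \<beta> * rl n j t"
    using scheme_rel_rhoD[OF sub[unfolded subsolution_def] \<open>1 \<le> n\<close>] by blast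
  have "rl' s - F (rl n j s) \<le> ru' s - F (ru n j s)" if "0 < s" for s
  proof -
    have "\<alpha> * (vl (n-1) j s 0 + vl (n-1) (j-1) s 1) \<le> \<alpha> * (vu (n-1) j s 0 + vu (n-1) (j-1) s 1)"
      using below that \<open>0 \<le> \<alpha>\<close> by (intro mult_left_mono add_mono) auto
    then show ?thesis using ru'_ge rl'_le that unfolding F_def by fastforce
  qed
  then show ?thesis using ode_comparison[OF lip ru' rl'] assms(7,8) by blast
qed

lemma v_comparison:
  assumes "0 < \<alpha>" and "0 \<le> \<beta>" and "0 < d"
    and super: "supersolution f \<alpha> \<beta> d vu ru" and sub: "subsolution f \<alpha> \<beta> d vl rl"
    and "1 \<le> n" and rho_below: "\<forall>j. \<forall>t>0. rl n j t \<le> ru n j t"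
    and init: "\<forall>x\<in>{0..1}. vl n j 0 x \<le> vu n j 0 x" and "0 \<le> t" and "x \<in> {0..1}"
  shows "vl n j t x \<le> vu n j t x"
proof -
  obtain vtU vxU vxxU where U: "continuous_on ({0..} \<times> {0..1}) (\<lambda>(t, x). vu n j t x)"
    "\<forall>t>0. \<forall>x\<in>{0<..<1}. ((\<lambda>s. vu n j s x) has_real_derivative vtU t x) (at t)"
    "\<forall>t>0. \<forall>x\<in>{0..1}. (vu n j t has_real_derivative vxU t x) (at x within {0..1})"
    "\<forall>t>0. \<forall>x\<in>{0<..<1}. (vxU t has_real_derivative vxxU t x) (at x)"
    "\<forall>t>0. \<forall>x\<in>{0<..<1}. d * vxxU t x \<le> vtU t x"
    "\<forall>t>0. \<beta> * ru n j t \<le> - d * vxU t 0 + \<alpha> * vu n j t 0"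
    "\<forall>t>0. \<beta> * ru n (j+1) t \<le> d * vxU t 1 + \<alpha> * vu n j t 1"
    using scheme_rel_vD[OF super[unfolded supersolution_def] \<open>1 \<le> n\<close>] by blast
  obtain vtL vxL vxxL where L: "continuous_on ({0..} \<times> {0..1}) (\<lambda>(t, x). vl n j t x)"
    "\<forall>t>0. \<forall>x\<in>{0<..<1}. ((\<lambda>s. vl n j s x) has_real_derivative vtL t x) (at t)"
    "\<forall>t>0. \<forall>x\<in>{0..1}. (vl n j t has_real_derivative vxL t x) (at x within {0..1})"
    "\<forall>t>0. \<forall>x\<in>{0<..<1}. (vxL t has_real_derivative vxxL t x) (at x)"
    "\<forall>t>0. \<forall>x\<in>{0<..<1}. vtL t x \<le> d * vxxL t x"
    "\<forall>t>0. - d * vxL t 0 + \<alpha> * vl n j t 0 \<le> \<beta> * rl n j t"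
    "\<forall>t>0. d * vxL t 1 + \<alpha> * vl n j t 1 \<le> \<beta> * rl n (j+1) t"
    using scheme_rel_vD[OF sub[unfolded subsolution_def] \<open>1 \<le> n\<close>] by blast
  have \<beta>_rho: "\<beta> * rl n i s \<le> \<beta> * ru n i s" if "0 < s" for i s
    using rho_below that \<open>0 \<le> \<beta>\<close> by (simp add: mult_left_mono)
  have "0 \<le> vu n j t x - vl n j t x"
  proof (rule robin_heat_minimum_principle[where w = "\<lambda>t x. vu n j t x - vl n j t x"
      and wt = "\<lambda>t x. vtU t x - vtL t x" and wx = "\<lambda>t x. vxU t x - vxL t x"
      and wxx = "\<lambda>t x. vxxU t x - vxxL t x", OF \<open>0 < d\<close> \<open>0 < \<alpha>\<close>])
    show "continuous_on ({0..} \<times> {0..1}) (\<lambda>(t, x). vu n j t x - vl n j t x)"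
      using continuous_on_diff[OF U(1) L(1)] by (simp add: case_prod_unfold)
    show "\<forall>t>0. \<forall>x\<in>{0<..<1}.
      ((\<lambda>s. vu n j s x - vl n j s x) has_real_derivative vtU t x - vtL t x) (at t)"
      using U(2) L(2) by (simp add: DERIV_diff)
    show "\<forall>t>0. \<forall>x\<in>{0..1}.
      ((\<lambda>y. vu n j t y - vl n j t y) has_real_derivative vxU t x - vxL t x) (at x within {0..1})"
      using U(3) L(3) by (simp add: DERIV_diff)
    show "\<forall>t>0. \<forall>x\<in>{0<..<1}.
      ((\<lambda>y. vxU t y - vxL t y) has_real_derivative vxxU t x - vxxL t x) (at x)"
      using U(4) L(4) by (simp add: DERIV_diff)
    show "\<forall>t>0. \<forall>x\<in>{0<..<1}. d * (vxxU t x - vxxL t x) \<le> vtU t x - vtL t x"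
      using U(5) L(5) by (fastforce simp: right_diff_distrib)
    show "\<forall>t>0. 0 \<le> - d * (vxU t 0 - vxL t 0) + \<alpha> * (vu n j t 0 - vl n j t 0)"
      using U(6) L(6) \<beta>_rho unfolding right_diff_distrib by (smt (verit))
    show "\<forall>t>0. 0 \<le> d * (vxU t 1 - vxL t 1) + \<alpha> * (vu n j t 1 - vl n j t 1)"
      using U(7) L(7) \<beta>_rho unfolding right_diff_distrib by (smt (verit))
  qed (use init \<open>0 \<le> t\<close> \<open>x \<in> {0..1}\<close> in auto)
  then show ?thesis by simp
qed

theorem proposition2p3:
  fixes f :: "real \<Rightarrow> real" and \<alpha> \<beta> d :: real
    and vu vl :: "nat \<Rightarrow> int \<Rightarrow> real \<Rightarrow> real \<Rightarrow> real"
    and ru rl :: "nat \<Rightarrow> int \<Rightarrow> real \<Rightarrow> real"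
  assumes "\<alpha> > 0" and "\<beta> > 0" and "d > 0"
    and "reaction_ok f"
    and "supersolution f \<alpha> \<beta> d vu ru"
    and "subsolution f \<alpha> \<beta> d vl rl"
    and "\<forall>j. \<forall>t\<ge>0. \<forall>x\<in>{0..1}. vl 0 j t x \<le> vu 0 j t x"
    and "\<forall>j. \<forall>t\<ge>0. rl 0 j t \<le> ru 0 j t"
    and "\<forall>n\<ge>1. \<forall>j. \<forall>x\<in>{0..1}. vl n j 0 x \<le> vu n j 0 x"
    and "\<forall>n\<ge>1. \<forall>j. rl n j 0 \<le> ru n j 0"
  shows "\<forall>n\<ge>1. \<forall>j. \<forall>t>0. (\<forall>x\<in>{0..1}. vl n j t x \<le> vu n j t x) \<and> rl n j t \<le> ru n j t"
proof -
  have rho_step: "\<forall>j. \<forall>t\<ge>0. rl n j t \<le> ru n j t"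
    if "1 \<le> n" and "\<forall>j. \<forall>t>0. \<forall>x\<in>{0..1}. vl (n-1) j t x \<le> vu (n-1) j t x" for n
    using rho_comparison[OF assms(4) _ assms(5,6) that] assms(1,10) \<open>1 \<le> n\<close> by simp
  have v_ordered: "\<forall>j. \<forall>t>0. \<forall>x\<in>{0..1}. vl n j t x \<le> vu n j t x" for n
  proof (induction n)
    case 0
    then show ?case using assms(7) by simp
  next
    case (Suc n)
    then have "\<forall>j. \<forall>t>0. rl (Suc n) j t \<le> ru (Suc n) j t" using rho_step[of "Suc n"] by simp
    then show ?case using v_comparison[OF assms(1) _ assms(3,5,6)] assms(2,9) by simp
  qed
  show ?thesis
  proof (intro allI impI conjI)
    fix n :: nat and j :: int and t :: real assume "1 \<le> n" and "0 < t"
    show "\<forall>x\<in>{0..1}. vl n j t x \<le> vu n j t x" using v_ordered \<open>0 < t\<close> by blast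
    show "rl n j t \<le> ru n j t" using rho_step[OF \<open>1 \<le> n\<close> v_ordered] \<open>0 < t\<close> by simp
  qed
qed

end
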